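(* Let $\overline{\mathbf{x}}\in\mathcal{F}^R(\mathbf{s})$ be any feasible fractional flow, and let $\mathbf{x}^\bullet$ be the integral solution obtained by applying the rounding procedure $\texttt{PSRR}$ to each player's fractional flow $\overline{\mathbf{x}}_i$. Then, for $\beta>0$, with probability at least $1-\beta$, $$\phi(\mathbf{x}^\bullet)\le\phi(\overline{\mathbf{x}})+m(\gamma+1)\sqrt{2n\ln(m/\beta)}.$$
   Context: Routing game $\Gamma=(G,\ell,\mathbf{s})$: directed graph $G=(V,E)$, $m=|E|$, latencies $\ell_e$ non-decreasing, convex, twice differentiable, $\ell_e(n)\le n$, $\gamma$-Lipschitz; $n$ players with demands $s_i=(s_i^1,s_i^2)$. $\mathcal{F}^R(\mathbf{s})\subseteq[0,1]^{n\times m}$: each $\mathbf{x}_i$ is a fractional unit flow from $s_i^1$ to $s_i^2$. $\phi(\mathbf{x})=\frac1n\sum_i\sum_ex_{i,e}\ell_e(\sum_jx_{j,e})$. $\texttt{PSRR}(\overline{\mathbf{x}}_i)$: decompose $\overline{\mathbf{x}}_i$ into $s_i^1$-to-$s_i^2$ paths $P_j$ with weights $w_j$ (for each path, $w_j=\min_{e\in P_j}\overline x_{i,e}$, then subtract $w_j$ on the edges of $P_j$), sample a path $P$ with $\Pr[P=P_j]=w_j$ (independently across players), and set $x^\bullet_{i,e}=\mathbb{1}[e\in P]$. *)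

theory Defs
  imports "HOL-Probability.Probability"
begin

type_synonym 'v edge = "'v \<times> 'v"

definition latency :: "real \<Rightarrow> nat \<Rightarrow> (real \<Rightarrow> real) \<Rightarrow> bool" where
  "latency \<gamma> n l \<longleftrightarrow>
     (\<forall>x\<ge>0. 0 \<le> l x) \<and>
     mono_on {0..} l \<and>
     convex_on {0..} l \<and>
     (\<exists>l' l''. \<forall>x\<ge>0. (l has_real_derivative l' x) (at x within {0..}) \<and>
                        (l' has_real_derivative l'' x) (at x within {0..})) \<and>
     \<gamma>-lipschitz_on {0..} l \<and>
     l (real n) \<le> real n"

definition unit_flow :: "'v edge set \<Rightarrow> 'v \<Rightarrow> 'v \<Rightarrow> ('v edge \<Rightarrow> real) \<Rightarrow> bool" where
  "unit_flow E a b f \<longleftrightarrow>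
     (\<forall>e\<in>E. 0 \<le> f e \<and> f e \<le> 1) \<and>
     (\<forall>v. (\<Sum>e\<in>{e\<in>E. fst e = v}. f e) - (\<Sum>e\<in>{e\<in>E. snd e = v}. f e)
          = (if v = a then 1 else 0) - (if v = b then 1 else 0))"

definition feasible :: "'v edge set \<Rightarrow> nat \<Rightarrow> (nat \<Rightarrow> 'v \<times> 'v) \<Rightarrow> (nat \<Rightarrow> 'v edge \<Rightarrow> real) \<Rightarrow> bool" where
  "feasible E n s x \<longleftrightarrow> (\<forall>i<n. unit_flow E (fst (s i)) (snd (s i)) (x i))"

definition phi :: "'v edge set \<Rightarrow> ('v edge \<Rightarrow> real \<Rightarrow> real) \<Rightarrow> nat \<Rightarrow> (nat \<Rightarrow> 'v edge \<Rightarrow> real) \<Rightarrow> real" where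
  "phi E l n x = (1 / real n) * (\<Sum>i<n. \<Sum>e\<in>E. x i e * l e (\<Sum>j<n. x j e))"

definition is_path :: "'v edge set \<Rightarrow> 'v \<Rightarrow> 'v \<Rightarrow> 'v edge list \<Rightarrow> bool" where
  "is_path E a b P \<longleftrightarrow> (\<exists>vs. distinct vs \<and> length vs \<ge> 2 \<and> hd vs = a \<and> last vs = b \<and>
       P = zip vs (tl vs) \<and> set P \<subseteq> E)"

text \<open>The greedy path decomposition performed by PSRR: repeatedly pick an a-to-b path P in
  the support of the current flow, take w = min of the flow over the edges of P, subtract w
  on the edges of P, until no a-to-b path remains in the support.\<close>
inductive psrr_decomp :: "'v edge set \<Rightarrow> 'v \<Rightarrow> 'v \<Rightarrow> ('v edge \<Rightarrow> real) \<Rightarrow> ('v edge list \<times> real) list \<Rightarrow> bool"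
  for E a b where
  stop: "\<not> (\<exists>P. is_path {e\<in>E. f e > 0} a b P) \<Longrightarrow> psrr_decomp E a b f []"
| step: "is_path {e\<in>E. f e > 0} a b P \<Longrightarrow> w = Min (f ` set P) \<Longrightarrow>
         psrr_decomp E a b (\<lambda>e. if e \<in> set P then f e - w else f e) D \<Longrightarrow>
         psrr_decomp E a b f ((P, w) # D)"

text \<open>Probability that PSRR samples path P given the decomposition D.\<close>
definition path_weight :: "('v edge list \<times> real) list \<Rightarrow> 'v edge list \<Rightarrow> real" where
  "path_weight D P = sum_list (map snd (filter (\<lambda>(Q, w). Q = P) D))"

definition path_flow :: "(nat \<Rightarrow> 'v edge list) \<Rightarrow> nat \<Rightarrow> 'v edge \<Rightarrow> real" where
  "path_flow Q i e = (if e \<in> set (Q i) then 1 else 0)"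

end

theory Submission
  imports Defs
begin

text \<open>Fix an edge e. The rounded load of e is a sum of n independent indicators, and the
  probability that PSRR routes player i through e is at most the fractional flow of i on e,
  because the weights of the decomposed paths through e never exceed that flow. Hoeffding's
  inequality and a union bound over the m edges show that, with probability at least
  1 - \<beta>, no edge load exceeds its fractional load by more than t = sqrt (2 n ln (m / \<beta>)).
  Since latencies are monotone, \<gamma>-Lipschitz and at most n on loads in [0, n], raising
  a load by t raises the cost L \<cdot> l(L) of an edge by at most n t (1 + \<gamma>); summing over
  the edges and dividing by n gives the bound on \<phi>.\<close>

lemma psrr_decomp_weight_through_edge_le:
  assumes "psrr_decomp E a b f D" "0 \<le> f e"
  shows "sum_list (map snd (filter (\<lambda>(Q, w). e \<in> set Q) D)) \<le> f e"
  using assms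
proof (induction rule: psrr_decomp.induct)
  case (stop f)
  then show ?case by simp
next
  case (step f P w D)
  show ?case
  proof (cases "e \<in> set P")
    case True
    then have "w \<le> f e" using step.hyps(2) by simp
    with step.IH True show ?thesis by simp
  next
    case False
    with step.IH step.prems show ?thesis by simp
  qed
qed

lemma sum_path_weight:
  assumes "finite S"
  shows "(\<Sum>P\<in>S. path_weight D P) = sum_list (map snd (filter (\<lambda>(Q, w). Q \<in> S) D))"
proof (induction D)
  case Nil
  then show ?case by (simp add: path_weight_def)
next
  case (Cons a D)
  obtain Q w where a: "a = (Q, w)" by force
  have "(\<Sum>P\<in>S. path_weight (a # D) P) = (\<Sum>P\<in>S. (if Q = P then w else 0) + path_weight D P)"
    by (intro sum.cong) (auto simp: path_weight_def a)
  also have "\<dots> = (if Q \<in> S then w else 0) + (\<Sum>P\<in>S. path_weight D P)"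
    using assms by (simp add: sum.distrib sum.delta)
  finally show ?case using Cons by (simp add: a)
qed

lemma prob_path_through_edge_le:
  assumes "psrr_decomp E a b f D" "0 \<le> f e" "\<forall>P. pmf p P = path_weight D P"
  shows "measure_pmf.prob p {P. e \<in> set P} \<le> f e"
proof -
  define A where "A = {P. e \<in> set P} \<inter> fst ` set D"
  have support: "set_pmf p \<subseteq> fst ` set D"
  proof
    fix P assume "P \<in> set_pmf p"
    then have "path_weight D P \<noteq> 0" using assms(3) by (simp add: set_pmf_eq)
    then have "filter (\<lambda>(Q, w). Q = P) D \<noteq> []" unfolding path_weight_def by auto
    then show "P \<in> fst ` set D" by (force simp: filter_empty_conv)
  qed
  have "finite A" unfolding A_def by simp
  have "measure_pmf.prob p {P. e \<in> set P} = measure_pmf.prob p ({P. e \<in> set P} \<inter> set_pmf p)"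
    by (simp add: measure_Int_set_pmf)
  also have "{P. e \<in> set P} \<inter> set_pmf p = A \<inter> set_pmf p" using support unfolding A_def by auto
  also have "measure_pmf.prob p (A \<inter> set_pmf p) = (\<Sum>P\<in>A. path_weight D P)"
    using \<open>finite A\<close> assms(3) by (simp add: measure_Int_set_pmf measure_measure_pmf_finite)
  also have "\<dots> = sum_list (map snd (filter (\<lambda>(Q, w). Q \<in> A) D))"
    using \<open>finite A\<close> by (rule sum_path_weight)
  also have "filter (\<lambda>(Q, w). Q \<in> A) D = filter (\<lambda>(Q, w). e \<in> set Q) D"
    unfolding A_def by (intro filter_cong) force+
  also have "sum_list (map snd \<dots>) \<le> f e" by (rule psrr_decomp_weight_through_edge_le[OF assms(1,2)])
  finally show ?thesis .
qed

lemma prob_Pi_pmf_count_ge_le: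
  fixes I :: "'i set" and p :: "'i \<Rightarrow> 'a pmf" and S :: "'a set" and t :: real
  assumes "finite I" "I \<noteq> {}" "0 \<le> t"
  shows "measure_pmf.prob (Pi_pmf I d p)
           {Q. (\<Sum>i\<in>I. measure_pmf.prob (p i) S) + t \<le> (\<Sum>i\<in>I. indicator S (Q i))}
         \<le> exp (- 2 * t\<^sup>2 / real (card I))"
proof -
  define X :: "'i \<Rightarrow> ('i \<Rightarrow> 'a) \<Rightarrow> real" where "X = (\<lambda>i Q. indicator S (Q i))"
  interpret Hoeffding_ineq "measure_pmf (Pi_pmf I d p)" I X "\<lambda>_. 0" "\<lambda>_. 1"
    "\<Sum>i\<in>I. measure_pmf.expectation (Pi_pmf I d p) (X i)"
  proof unfold_locales
    show "prob_space.indep_vars (measure_pmf (Pi_pmf I d p)) (\<lambda>_. borel) X I"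
      unfolding X_def
      by (intro prob_space.indep_vars_compose2[OF _ indep_vars_Pi_pmf])
         (auto simp: measure_pmf.prob_space_axioms assms)
  qed (auto simp: X_def assms)
  have "measure_pmf.expectation (Pi_pmf I d p) (X i) = measure_pmf.prob (p i) S" if "i \<in> I" for i
  proof -
    have "measure_pmf.expectation (Pi_pmf I d p) (X i)
          = measure_pmf.expectation (map_pmf (\<lambda>Q. Q i) (Pi_pmf I d p)) (indicator S)"
      unfolding X_def integral_map_pmf ..
    also have "map_pmf (\<lambda>Q. Q i) (Pi_pmf I d p) = p i"
      using that assms by (simp add: Pi_pmf_component)
    finally show ?thesis by simp
  qed
  then have "(\<Sum>i\<in>I. measure_pmf.expectation (Pi_pmf I d p) (X i))
             = (\<Sum>i\<in>I. measure_pmf.prob (p i) S)"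
    by simp
  then show ?thesis
    using Hoeffding_ineq_ge[OF assms(3)] assms by (simp add: X_def card_gt_0_iff)
qed

definition edge_load :: "nat \<Rightarrow> (nat \<Rightarrow> 'e \<Rightarrow> real) \<Rightarrow> 'e \<Rightarrow> real" where
  "edge_load n x e = (\<Sum>i<n. x i e)"

lemma edge_load_path_flow: "edge_load n (path_flow Q) e = (\<Sum>i<n. indicator {P. e \<in> set P} (Q i))"
  unfolding edge_load_def path_flow_def by (intro sum.cong) (auto simp: indicator_def)

lemma edge_load_bounds:
  assumes "\<And>i. i < n \<Longrightarrow> 0 \<le> x i e \<and> x i e \<le> 1"
  shows "0 \<le> edge_load n x e" "edge_load n x e \<le> real n"
proof -
  show "0 \<le> edge_load n x e" unfolding edge_load_def using assms by (auto intro: sum_nonneg)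
  have "edge_load n x e \<le> (\<Sum>i<n. 1)" unfolding edge_load_def using assms by (intro sum_mono) auto
  then show "edge_load n x e \<le> real n" by simp
qed

lemma prob_rounded_edge_load_ge_le:
  assumes "0 < n" "0 \<le> t" "\<forall>i<n. 0 \<le> xbar i e"
    and "\<forall>i<n. psrr_decomp E (fst (s i)) (snd (s i)) (xbar i) (D i)"
    and "\<forall>i<n. \<forall>P. pmf (p i) P = path_weight (D i) P"
  shows "measure_pmf.prob (Pi_pmf {..<n} d p)
           {Q. edge_load n xbar e + t \<le> edge_load n (path_flow Q) e}
         \<le> exp (- 2 * t\<^sup>2 / real n)"
proof -
  have "(\<Sum>i<n. measure_pmf.prob (p i) {P. e \<in> set P}) \<le> edge_load n xbar e"
    unfolding edge_load_def using assms(3-5) by (intro sum_mono prob_path_through_edge_le) auto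
  then have "measure_pmf.prob (Pi_pmf {..<n} d p)
               {Q. edge_load n xbar e + t \<le> edge_load n (path_flow Q) e}
             \<le> measure_pmf.prob (Pi_pmf {..<n} d p)
               {Q. (\<Sum>i<n. measure_pmf.prob (p i) {P. e \<in> set P}) + t
                   \<le> (\<Sum>i<n. indicator {P. e \<in> set P} (Q i))}"
    by (intro measure_pmf.finite_measure_mono) (auto simp: edge_load_path_flow)
  also have "\<dots> \<le> exp (- 2 * t\<^sup>2 / real n)"
    using prob_Pi_pmf_count_ge_le[OF finite_lessThan _ assms(2)] assms(1) by (simp add: lessThan_empty_iff)
  finally show ?thesis .
qed

lemma prob_ge_one_minus_sum_bad:
  assumes "finite E" "\<And>Q. (\<And>e. e \<in> E \<Longrightarrow> Q \<notin> B e) \<Longrightarrow> Q \<in> G"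
  shows "1 - (\<Sum>e\<in>E. measure_pmf.prob M (B e)) \<le> measure_pmf.prob M G"
proof -
  have "measure_pmf.prob M (\<Union>e\<in>E. B e) \<le> (\<Sum>e\<in>E. measure_pmf.prob M (B e))"
    using assms(1) by (intro measure_pmf.finite_measure_subadditive_finite) auto
  moreover have "measure_pmf.prob M (UNIV - (\<Union>e\<in>E. B e)) \<le> measure_pmf.prob M G"
    using assms(2) by (intro measure_pmf.finite_measure_mono) auto
  moreover have "measure_pmf.prob M (UNIV - (\<Union>e\<in>E. B e)) = 1 - measure_pmf.prob M (\<Union>e\<in>E. B e)"
    using measure_pmf.prob_compl[of "\<Union>e\<in>E. B e" M] by simp
  ultimately show ?thesis by linarith
qed

lemma phi_eq_sum_edge_load:
  "phi E l n x = (1 / real n) * (\<Sum>e\<in>E. edge_load n x e * l e (edge_load n x e))"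
  unfolding phi_def edge_load_def by (subst sum.swap) (simp add: sum_distrib_right)

lemma latency_edge_cost_le:
  fixes L Lb t :: real
  assumes lat: "latency \<gamma> n l" and "0 \<le> L" "L \<le> n" "0 \<le> Lb" "Lb \<le> n" "L \<le> Lb + t" "0 \<le> t"
  shows "L * l L \<le> Lb * l Lb + n * t * (1 + \<gamma>)"
proof -
  from lat have nonneg: "\<And>x. 0 \<le> x \<Longrightarrow> 0 \<le> l x" and mono: "mono_on {0..} l"
    and lip: "\<gamma>-lipschitz_on {0..} l" and at_n: "l (real n) \<le> real n"
    unfolding latency_def by auto
  have "0 \<le> \<gamma>" using lip by (simp add: lipschitz_on_def)
  show ?thesis
  proof (cases "L \<le> Lb")
    case True
    then have "l L \<le> l Lb" using mono assms by (auto simp: mono_on_def)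
    then have "L * l L \<le> Lb * l Lb" using True assms nonneg by (meson mult_mono)
    moreover have "0 \<le> n * t * (1 + \<gamma>)" using assms \<open>0 \<le> \<gamma>\<close> by simp
    ultimately show ?thesis by linarith
  next
    case False
    have "l L \<le> n" using mono assms at_n by (auto simp: mono_on_def) (smt (verit) atLeast_iff)
    have "l L - l Lb \<le> \<gamma> * (L - Lb)"
      using lip assms False by (auto simp: lipschitz_on_def dist_real_def) (smt (verit) atLeast_iff)
    also have "\<dots> \<le> \<gamma> * t" using assms \<open>0 \<le> \<gamma>\<close> by (simp add: mult_left_mono)
    finally have lip_step: "l L - l Lb \<le> \<gamma> * t" .
    have "L * l L - Lb * l Lb = (L - Lb) * l L + Lb * (l L - l Lb)" by (simp add: algebra_simps)
    also have "(L - Lb) * l L \<le> t * n"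
      using False assms \<open>l L \<le> n\<close> nonneg[of L] by (intro mult_mono) auto
    also have "Lb * (l L - l Lb) \<le> n * (\<gamma> * t)"
      using mono assms False lip_step \<open>0 \<le> \<gamma>\<close> by (intro mult_mono) (auto simp: mono_on_def)
    finally show ?thesis by (simp add: algebra_simps)
  qed
qed

lemma phi_le_of_edge_load_le:
  assumes "finite E" "0 < n" "0 \<le> t" "\<forall>e\<in>E. latency \<gamma> n (l e)"
    and "\<And>e. e \<in> E \<Longrightarrow> 0 \<le> edge_load n x e \<and> edge_load n x e \<le> n"
    and "\<And>e. e \<in> E \<Longrightarrow> 0 \<le> edge_load n y e \<and> edge_load n y e \<le> n"
    and "\<And>e. e \<in> E \<Longrightarrow> edge_load n x e \<le> edge_load n y e + t"
  shows "phi E l n x \<le> phi E l n y + real (card E) * (\<gamma> + 1) * t"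
proof -
  have "(\<Sum>e\<in>E. edge_load n x e * l e (edge_load n x e))
        \<le> (\<Sum>e\<in>E. edge_load n y e * l e (edge_load n y e) + n * t * (1 + \<gamma>))"
    using assms by (intro sum_mono latency_edge_cost_le) auto
  also have "\<dots> = (\<Sum>e\<in>E. edge_load n y e * l e (edge_load n y e)) + n * (real (card E) * (\<gamma> + 1) * t)"
    by (simp add: sum.distrib algebra_simps)
  finally show ?thesis
    using \<open>0 < n\<close> unfolding phi_eq_sum_edge_load by (simp add: field_simps)
qed

lemma feasible_edges_nonempty:
  assumes "feasible E n s x" "0 < n" "fst (s 0) \<noteq> snd (s 0)"
  shows "E \<noteq> {}"
proof
  assume "E = {}"
  have "unit_flow E (fst (s 0)) (snd (s 0)) (x 0)" using assms(1,2) by (simp add: feasible_def)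
  then have "(\<Sum>e\<in>{e\<in>E. fst e = fst (s 0)}. x 0 e) - (\<Sum>e\<in>{e\<in>E. snd e = fst (s 0)}. x 0 e)
      = 1 - (if fst (s 0) = snd (s 0) then 1 else 0)"
    unfolding unit_flow_def by simp
  then show False using \<open>E = {}\<close> assms(3) by simp
qed

lemma prob_phi_path_flow_le:
  assumes fin: "finite E" and lat: "\<forall>e\<in>E. latency \<gamma> n (l e)"
    and ends: "\<forall>i<n. fst (s i) \<noteq> snd (s i)" and feas: "feasible E n s xbar"
    and decomp: "\<forall>i<n. psrr_decomp E (fst (s i)) (snd (s i)) (xbar i) (D i)"
    and weights: "\<forall>i<n. \<forall>P. pmf (p i) P = path_weight (D i) P"
    and "0 < \<beta>" "\<beta> < 1" "0 < n"
  shows "1 - \<beta> \<le> measure_pmf.prob (Pi_pmf {..<n} d p)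
           {Q. phi E l n (path_flow Q) \<le> phi E l n xbar
                 + real (card E) * (\<gamma> + 1) * sqrt (2 * real n * ln (real (card E) / \<beta>))}"
proof -
  define m where "m = real (card E)"
  define t where "t = sqrt (2 * real n * ln (m / \<beta>))"
  define overload_event where
    "overload_event e = {Q. edge_load n xbar e + t \<le> edge_load n (path_flow Q) e}" for e
  have xbar_unit: "0 \<le> xbar i e \<and> xbar i e \<le> 1" if "i < n" "e \<in> E" for i e
    using feas that unfolding feasible_def unit_flow_def by blast
  have "E \<noteq> {}" using feasible_edges_nonempty ends feas \<open>0 < n\<close> by blast
  then have "1 \<le> m" using fin unfolding m_def by (simp add: Suc_leI card_gt_0_iff)
  then have "0 < ln (m / \<beta>)" using \<open>0 < \<beta>\<close> \<open>\<beta> < 1\<close> by (simp add: field_simps)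
  then have "0 \<le> t" and t_sq: "t\<^sup>2 = 2 * real n * ln (m / \<beta>)" unfolding t_def by simp_all
  have overload_bound:
    "measure_pmf.prob (Pi_pmf {..<n} d p) (overload_event e) \<le> \<beta> / m" if "e \<in> E" for e
  proof -
    have "measure_pmf.prob (Pi_pmf {..<n} d p) (overload_event e) \<le> exp (- 2 * t\<^sup>2 / real n)"
      unfolding overload_event_def using xbar_unit \<open>e \<in> E\<close>
      by (intro prob_rounded_edge_load_ge_le[OF \<open>0 < n\<close> \<open>0 \<le> t\<close> _ decomp weights]) blast
    also have "\<dots> \<le> exp (- ln (m / \<beta>))"
      using t_sq \<open>0 < n\<close> \<open>0 < ln (m / \<beta>)\<close> by simp
    also have "\<dots> = \<beta> / m" using \<open>1 \<le> m\<close> \<open>0 < \<beta>\<close> by (simp add: ln_div exp_diff)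
    finally show ?thesis .
  qed
  have "(\<Sum>e\<in>E. measure_pmf.prob (Pi_pmf {..<n} d p) (overload_event e)) \<le> (\<Sum>e\<in>E. \<beta> / m)"
    using overload_bound by (rule sum_mono)
  also have "\<dots> = \<beta>" using \<open>1 \<le> m\<close> unfolding m_def by simp
  finally have "1 - \<beta> \<le> 1 - (\<Sum>e\<in>E. measure_pmf.prob (Pi_pmf {..<n} d p) (overload_event e))"
    by simp
  also have "\<dots> \<le> measure_pmf.prob (Pi_pmf {..<n} d p)
                   {Q. phi E l n (path_flow Q) \<le> phi E l n xbar + m * (\<gamma> + 1) * t}"
  proof (rule prob_ge_one_minus_sum_bad[OF fin])
    fix Q assume typical: "\<And>e. e \<in> E \<Longrightarrow> Q \<notin> overload_event e"
    have "phi E l n (path_flow Q) \<le> phi E l n xbar + real (card E) * (\<gamma> + 1) * t"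
    proof (rule phi_le_of_edge_load_le[OF fin \<open>0 < n\<close> \<open>0 \<le> t\<close> lat])
      fix e assume "e \<in> E"
      show "edge_load n (path_flow Q) e \<le> edge_load n xbar e + t"
        using typical[OF \<open>e \<in> E\<close>] unfolding overload_event_def by auto
      show "0 \<le> edge_load n xbar e \<and> edge_load n xbar e \<le> n"
        using edge_load_bounds[of n xbar e] xbar_unit \<open>e \<in> E\<close> by blast
      show "0 \<le> edge_load n (path_flow Q) e \<and> edge_load n (path_flow Q) e \<le> n"
        using edge_load_bounds[of n "path_flow Q" e] by (simp add: path_flow_def)
    qed
    then show "Q \<in> {Q. phi E l n (path_flow Q) \<le> phi E l n xbar + m * (\<gamma> + 1) * t}"
      unfolding m_def by simp
  qed
  finally show ?thesis unfolding m_def t_def .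
qed

theorem lemma4p8:
  fixes E :: "'v edge set" and l :: "'v edge \<Rightarrow> real \<Rightarrow> real" and \<gamma> :: real
    and n :: nat and s :: "nat \<Rightarrow> 'v \<times> 'v" and xbar :: "nat \<Rightarrow> 'v edge \<Rightarrow> real"
    and D :: "nat \<Rightarrow> ('v edge list \<times> real) list" and p :: "nat \<Rightarrow> 'v edge list pmf"
    and \<beta> :: real
  assumes "finite E"
    and "\<forall>e\<in>E. latency \<gamma> n (l e)"
    and "\<forall>i<n. fst (s i) \<noteq> snd (s i)"
    and "feasible E n s xbar"
    and "\<forall>i<n. psrr_decomp E (fst (s i)) (snd (s i)) (xbar i) (D i)"
    and "\<forall>i<n. \<forall>P. pmf (p i) P = path_weight (D i) P"
    and "\<beta> > 0"
  shows "measure_pmf.prob (Pi_pmf {..<n} [] p)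
           {Q. phi E l n (path_flow Q) \<le> phi E l n xbar
                 + real (card E) * (\<gamma> + 1) * sqrt (2 * real n * ln (real (card E) / \<beta>))}
         \<ge> 1 - \<beta>"
proof -
  consider "n = 0" | "1 \<le> \<beta>" | "0 < n" "\<beta> < 1" by linarith
  then show ?thesis
  proof cases
    case 1
    then show ?thesis using assms(7) by (simp add: phi_def)
  next
    case 2
    then show ?thesis by (intro order_trans[OF _ measure_nonneg]) simp
  next
    case 3
    then show ?thesis using prob_phi_path_flow_le[OF assms] by blast
  qed
qed

end
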